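(* Let $u=a_1\cdots a_n$ be a word over a finite alphabet $A$ and let $i$ be a $c$-position of $u$. Let $P_i$ be the set of all predecessors of $i$, i.e. the set of positions $j$ such that there exists an X-ranker $r\mathsf X_c$ of minimal length among X-rankers reaching $i$ with $r\mathsf X_c(u)=i$ and $r(u)=j$. Then the positions in $P_i$ all have pairwise different labels.
   Context: An X-ranker is a nonempty word over $\{\mathsf X_a : a\in A\}$, length = word length. For a word $w$, $\mathsf X_a(w)$ is the smallest $a$-position of $w$ and $r\mathsf X_a(w)$ the smallest $a$-position greater than $r(w)$ (possibly undefined). The label of position $j$ of $u$ is $a_j$. *)

theory Defs
  imports Main
begin

(* Words are lists; positions are 1-based: position j of u (1 <= j <= length u)
   carries label  u ! (j - 1). *)

definition label :: "'a list \<Rightarrow> nat \<Rightarrow> 'a" where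
  "label u j = u ! (j - 1)"

definition is_pos :: "'a list \<Rightarrow> 'a \<Rightarrow> nat \<Rightarrow> bool" where
  "is_pos u a j \<longleftrightarrow> 1 \<le> j \<and> j \<le> length u \<and> label u j = a"

definition next_pos :: "'a list \<Rightarrow> 'a \<Rightarrow> nat \<Rightarrow> nat option" where
  "next_pos u a p = (if \<exists>j. p < j \<and> is_pos u a j
     then Some (LEAST j. p < j \<and> is_pos u a j) else None)"

(* An X-ranker X_{b1} ... X_{bk} is represented by the nonempty list [b1,...,bk].
   Evaluation: X_a(u) = smallest a-position, (r X_a)(u) = smallest a-position > r(u).
   The empty list evaluates to the dummy position 0 (only used internally). *)
definition eval_ranker :: "'a list \<Rightarrow> 'a list \<Rightarrow> nat option" where
  "eval_ranker r u = fold (\<lambda>a p. Option.bind p (next_pos u a)) r (Some 0)"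

definition reaches :: "'a list \<Rightarrow> 'a list \<Rightarrow> nat \<Rightarrow> bool" where
  "reaches r u i \<longleftrightarrow> r \<noteq> [] \<and> eval_ranker r u = Some i"

definition min_len :: "'a list \<Rightarrow> nat \<Rightarrow> nat" where
  "min_len u i = (LEAST n. \<exists>r. reaches r u i \<and> length r = n)"

definition preds :: "'a list \<Rightarrow> 'a \<Rightarrow> nat \<Rightarrow> nat set" where
  "preds u c i = {j. \<exists>r. r \<noteq> [] \<and> reaches (r @ [c]) u i
      \<and> length (r @ [c]) = min_len u i \<and> eval_ranker r u = Some j}"

end

theory Submission
  imports Defs
begin

(* If two predecessors j < k of i carried the same label b, write the ranker reaching k as
   s X_b. Since there is no b-position strictly between s(u) and k, while j is one, we get
   j <= s(u) < k < i. Then s X_c already reaches i, since i is the first c-position after j;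
   this ranker is one letter shorter than the minimal ones. *)

lemma next_pos_eq_Some_iff:
  "next_pos u a p = Some q \<longleftrightarrow>
     p < q \<and> is_pos u a q \<and> (\<forall>j. p < j \<and> j < q \<longrightarrow> \<not> is_pos u a j)"
proof
  assume q: "next_pos u a p = Some q"
  then have ex: "\<exists>j. p < j \<and> is_pos u a j"
    by (auto simp: next_pos_def split: if_splits)
  with q have "q = (LEAST j. p < j \<and> is_pos u a j)"
    by (simp add: next_pos_def)
  with LeastI_ex[OF ex] not_less_Least show
    "p < q \<and> is_pos u a q \<and> (\<forall>j. p < j \<and> j < q \<longrightarrow> \<not> is_pos u a j)"
    by blast
next
  assume q: "p < q \<and> is_pos u a q \<and> (\<forall>j. p < j \<and> j < q \<longrightarrow> \<not> is_pos u a j)"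
  then have "(LEAST j. p < j \<and> is_pos u a j) = q"
    by (intro Least_equality) (auto simp: not_less[symmetric])
  with q show "next_pos u a p = Some q"
    by (auto simp: next_pos_def)
qed

lemma next_pos_from_later_start:
  assumes "next_pos u a j = Some i" "j \<le> p" "p < i"
  shows "next_pos u a p = Some i"
  using assms by (auto simp: next_pos_eq_Some_iff)

lemma eval_ranker_snoc:
  "eval_ranker (s @ [a]) u = Option.bind (eval_ranker s u) (next_pos u a)"
  by (simp add: eval_ranker_def)

lemma eval_ranker_snoc_eq_Some:
  "eval_ranker (s @ [a]) u = Some q \<longleftrightarrow> (\<exists>p. eval_ranker s u = Some p \<and> next_pos u a p = Some q)"
  by (cases "eval_ranker s u") (auto simp: eval_ranker_snoc)

lemma eval_ranker_is_pos_last: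
  assumes "r \<noteq> []" "eval_ranker r u = Some j"
  shows "is_pos u (last r) j"
proof -
  obtain s a where "r = s @ [a]"
    using assms(1) by (metis rev_exhaust)
  with assms(2) show ?thesis
    by (auto simp: eval_ranker_snoc_eq_Some next_pos_eq_Some_iff)
qed

lemma min_len_le:
  assumes "reaches r u i"
  shows "min_len u i \<le> length r"
  unfolding min_len_def using assms by (blast intro: Least_le)

lemma preds_less_imp_label_neq:
  assumes j: "j \<in> preds u c i" and k: "k \<in> preds u c i" and "j < k"
  shows "label u j \<noteq> label u k"
proof
  assume same_label: "label u j = label u k"
  obtain r where r: "r \<noteq> []" "eval_ranker r u = Some j" and ji: "next_pos u c j = Some i"
    using j by (auto simp: preds_def reaches_def eval_ranker_snoc)
  from r have j_pos: "is_pos u (last r) j"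
    by (rule eval_ranker_is_pos_last)
  obtain r' where r'_min: "length (r' @ [c]) = min_len u i" and "r' \<noteq> []"
    and r'_k: "eval_ranker r' u = Some k" and ki: "next_pos u c k = Some i"
    using k by (auto simp: preds_def reaches_def eval_ranker_snoc)
  then obtain s b where r': "r' = s @ [b]"
    by (metis rev_exhaust)
  with r'_k obtain p where s_p: "eval_ranker s u = Some p" and pk: "next_pos u b p = Some k"
    by (auto simp: eval_ranker_snoc_eq_Some)
  have pk_facts: "p < k" "is_pos u b k" "\<forall>x. p < x \<and> x < k \<longrightarrow> \<not> is_pos u b x"
    using pk by (simp_all add: next_pos_eq_Some_iff)
  have "is_pos u b j"
    using j_pos same_label pk_facts(2) by (simp add: is_pos_def)
  with pk_facts(3) \<open>j < k\<close> have "j \<le> p"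
    by (meson not_le)
  moreover have "k < i"
    using ki by (simp add: next_pos_eq_Some_iff)
  ultimately have "next_pos u c p = Some i"
    using pk_facts(1) by (auto intro: next_pos_from_later_start[OF ji])
  with s_p have "reaches (s @ [c]) u i"
    by (simp add: reaches_def eval_ranker_snoc)
  then have "min_len u i \<le> length (s @ [c])"
    by (rule min_len_le)
  with r'_min r' show False
    by simp
qed

theorem lemma22:
  fixes u :: "'a::finite list" and c :: 'a and i :: nat
  assumes "is_pos u c i"
  shows "\<forall>j \<in> preds u c i. \<forall>k \<in> preds u c i. j \<noteq> k \<longrightarrow> label u j \<noteq> label u k"
  using preds_less_imp_label_neq by (metis linorder_neqE_nat)

end
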